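(* Let $n\geq 3$ be odd and write $a\oplus 1$ for addition modulo $n$ on indices in $\{1,\dots,n\}$. (i) For any Hilbert space and any Hermitian operators $\bar X_1,\dots,\bar X_n$ with $\bar X_a^2=\mathbf{1}$ and $[\bar X_a,\bar X_{a\oplus1}]=0$ for all $a$, one has $$\sum_{a=1}^n \bar X_a\bar X_{a\oplus 1}\;\geq\; n\Big(1-\frac{4\cos(\pi/n)}{1+\cos(\pi/n)}\Big)\mathbf{1}.$$ (ii) This bound is attained: in $\mathbb{C}^3$ let $|l_a\rangle=(\sin\theta\cos\varphi_a,\sin\theta\sin\varphi_a,\cos\theta)$ with $\varphi_a=\frac{n-1}{n}\pi a$ and $\cos^2\theta=\cos(\pi/n)/(1+\cos(\pi/n))$. Then $\langle l_a|l_{a\oplus1}\rangle=0$ for all $a$; with $\hat X_a=|l_a\rangle\langle l_a|$, $\bar X_a=2\hat X_a-\mathbf{1}$ and the state $|\psi\rangle=(0,0,1)$, the expectation of $\sum_a\bar X_a\bar X_{a\oplus1}$ equals $n-\frac{4n\cos(\pi/n)}{1+\cos(\pi/n)}$, and for each $a$ the probability that a joint measurement of the commuting projectors $\hat X_a,\hat X_{a\oplus1}$ yields anti-correlated outcomes equals $\frac{2\cos(\pi/n)}{1+\cos(\pi/n)}$. For $n\geq 5$ this probability exceeds $1-\frac1n$.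
   Context: The value $1-\frac1n$ is the maximal average probability of anti-correlation of adjacent pairs in a ring of $n$ (odd) binary variables that all have fixed values. *)

theory Defs
  imports "HOL-Analysis.Analysis"
begin

definition hnorm :: "('h \<Rightarrow> 'h \<Rightarrow> complex) \<Rightarrow> 'h \<Rightarrow> real" where
  "hnorm ip x = sqrt (Re (ip x x))"

definition hilbert_space ::
  "(complex \<Rightarrow> 'h::ab_group_add \<Rightarrow> 'h) \<Rightarrow> ('h \<Rightarrow> 'h \<Rightarrow> complex) \<Rightarrow> bool" where
  "hilbert_space sc ip \<longleftrightarrow>
     vector_space sc \<and>
     (\<forall>x y. ip x y = cnj (ip y x)) \<and>
     (\<forall>x y z. ip x (y + z) = ip x y + ip x z) \<and>
     (\<forall>c x y. ip x (sc c y) = c * ip x y) \<and>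
     (\<forall>x. 0 \<le> Re (ip x x)) \<and>
     (\<forall>x. ip x x = 0 \<longrightarrow> x = 0) \<and>
     (\<forall>f :: nat \<Rightarrow> 'h.
        (\<forall>e>0. \<exists>N. \<forall>m\<ge>N. \<forall>k\<ge>N. hnorm ip (f m - f k) < e) \<longrightarrow>
        (\<exists>L. \<forall>e>0. \<exists>N. \<forall>m\<ge>N. hnorm ip (f m - L) < e))"

definition hermitian_op ::
  "(complex \<Rightarrow> 'h::ab_group_add \<Rightarrow> 'h) \<Rightarrow> ('h \<Rightarrow> 'h \<Rightarrow> complex) \<Rightarrow> ('h \<Rightarrow> 'h) \<Rightarrow> bool" where
  "hermitian_op sc ip A \<longleftrightarrow> Vector_Spaces.linear sc sc A \<and> (\<forall>x y. ip (A x) y = ip x (A y))"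

definition cyc_succ :: "nat \<Rightarrow> nat \<Rightarrow> nat" where
  "cyc_succ n a = a mod n + 1"

definition braket :: "complex^3 \<Rightarrow> complex^3 \<Rightarrow> complex" where
  "braket u v = (\<Sum>i\<in>UNIV. cnj (u $ i) * v $ i)"

definition ket_l :: "real \<Rightarrow> real \<Rightarrow> complex^3" where
  "ket_l \<theta> \<phi> = vector [complex_of_real (sin \<theta> * cos \<phi>), complex_of_real (sin \<theta> * sin \<phi>),
                        complex_of_real (cos \<theta>)]"

definition phi_angle :: "nat \<Rightarrow> nat \<Rightarrow> real" where
  "phi_angle n a = (real n - 1) / real n * pi * real a"

definition proj :: "complex^3 \<Rightarrow> complex^3^3" where
  "proj u = (\<chi> i j. u $ i * cnj (u $ j))"

definition obs :: "complex^3^3 \<Rightarrow> complex^3^3" where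
  "obs P = (\<chi> i j. 2 * P $ i $ j - (if i = j then 1 else 0))"

definition expect :: "complex^3^3 \<Rightarrow> complex^3 \<Rightarrow> complex" where
  "expect M \<psi> = braket \<psi> (M *v \<psi>)"

definition psi0 :: "complex^3" where
  "psi0 = vector [0, 0, 1]"

text \<open>Born-rule probability that a joint measurement of commuting projectors P, Q
gives anti-correlated outcomes (1,0) or (0,1).\<close>
definition anticorr_prob :: "complex^3^3 \<Rightarrow> complex^3^3 \<Rightarrow> complex^3 \<Rightarrow> complex" where
  "anticorr_prob P Q \<psi> = expect (P ** (mat 1 - Q) + (mat 1 - P) ** Q) \<psi>"

end

theory Submission
  imports Defs
begin

text \<open>
  Write P_a = (1 + X_a)/2 and Q_a = (1 - X_a)/2. Then 1 - X_a X_(a+1) = 2 (P_a Q_(a+1) + Q_a P_(a+1)),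
  so it suffices to bound the sum of <psi, P_a Q_(a+1) psi> by n cos(pi/n)/(1 + cos(pi/n)) |psi|^2,
  and likewise with P and Q exchanged. The vectors w_a = 4 P_a Q_(a+1) psi satisfy
  |w_a|^2 = 4 <psi, w_a>, and w_a is orthogonal to w_(a+1) because Q_(a+1) P_(a+1) = 0: they form
  an orthogonal representation of the odd cycle C_n, and the bound is its Lovasz theta number.
  It follows from the positive semidefiniteness of the form sum_a cos(pi/n) |s_a|^2 + Re <s_a, s_(a+1)>
  on the odd cycle (the least eigenvalue of the adjacency matrix of C_n is -2 cos(pi/n)), which is
  proved by completing squares one vertex at a time.
\<close>

lemma sin_pi_div_gt_zero:
  assumes "0 < k" "k < n"
  shows "0 < sin (real k * (pi / real n))"
proof (rule sin_gt_zero)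
  show "0 < real k * (pi / real n)" using assms by simp
  have "real k / real n < 1" using assms by simp
  from mult_strict_right_mono[OF this pi_gt_zero]
  show "real k * (pi / real n) < pi" by simp
qed

lemma cos_pi_div_gt_zero:
  assumes "3 \<le> n"
  shows "0 < cos (pi / real n)"
proof (rule cos_gt_zero)
  show "0 < pi / real n" using assms by simp
  show "pi / real n < pi / 2" using assms by (simp add: field_simps)
qed

lemma cos_ge_one_minus_half_square: "1 - x\<^sup>2 / 2 \<le> cos (x::real)"
proof -
  have "(sin (x / 2))\<^sup>2 \<le> (x / 2)\<^sup>2"
    using abs_sin_x_le_abs_x[of "x / 2"] by (metis power2_abs abs_ge_zero power_mono)
  then show ?thesis using cos_double_sin[of "x / 2"] by (simp add: power2_eq_square)
qed

lemma cyc_succ_less: "a < n \<Longrightarrow> cyc_succ n a = a + 1"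
  by (simp add: cyc_succ_def)

lemma cyc_succ_self: "cyc_succ n n = 1"
  by (simp add: cyc_succ_def)

lemma cyc_succ_in: "a \<in> {1..n} \<Longrightarrow> cyc_succ n a \<in> {1..n}"
  by (simp add: cyc_succ_def Suc_leI)

lemma sum_cyc_succ_reindex: "(\<Sum>a=1..n. f (cyc_succ n a)) = (\<Sum>a=1..n. f a)"
proof (rule sum.reindex_bij_betw)
  have "inj_on (cyc_succ n) {1..n}"
  proof (rule inj_onI)
    fix a b assume "a \<in> {1..n}" "b \<in> {1..n}" "cyc_succ n a = cyc_succ n b"
    then show "a = b" unfolding cyc_succ_def by (cases "a = n"; cases "b = n") auto
  qed
  moreover have "cyc_succ n ` {1..n} \<subseteq> {1..n}"
    using cyc_succ_in by blast
  ultimately show "bij_betw (cyc_succ n) {1..n} {1..n}"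
    by (simp add: bij_betw_def endo_inj_surj)
qed

text \<open>
  Completing squares in the cycle form vertex by vertex (with t = pi/n): cycle_pivot t k is the
  coefficient of |s_k|^2 when s_k is eliminated, and cycle_corner t k the coefficient of the
  coupling Re <s_k, s_n> that the eliminations create.
\<close>

definition cycle_pivot :: "real \<Rightarrow> nat \<Rightarrow> real" where
  "cycle_pivot t k = sin (real (k + 1) * t) / (2 * sin (real k * t))"

definition cycle_corner :: "real \<Rightarrow> nat \<Rightarrow> real" where
  "cycle_corner t k = (-1) ^ (k - 1) * sin t / sin (real k * t)"

lemma cycle_coeff_recurrences:
  fixes t :: real
  assumes k: "1 \<le> k" and S0: "sin (real k * t) \<noteq> 0" and S1: "sin (real (k + 1) * t) \<noteq> 0"
  shows "cos t - 1 / (4 * cycle_pivot t k) = cycle_pivot t (k + 1)"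
    and "- cycle_corner t k / (2 * cycle_pivot t k) = cycle_corner t (k + 1)"
    and "cycle_pivot t k - (cycle_corner t k)\<^sup>2 / (4 * cycle_pivot t k) = cycle_pivot t (k + 1)"
proof -
  define x where "x = real (k + 1) * t"
  have x_minus: "real k * t = x - t" and x_plus: "real (k + 2) * t = x + t"
    by (simp_all add: x_def algebra_simps)
  have sum: "sin (x - t) + sin (x + t) = 2 * cos t * sin x"
    by (simp add: sin_diff sin_add)
  have prod: "sin (x - t) * sin (x + t) = (sin x)\<^sup>2 - (sin t)\<^sup>2"
  proof -
    have "sin (x - t) * sin (x + t) = (sin x * cos t)\<^sup>2 - (cos x * sin t)\<^sup>2"
      by (simp add: sin_diff sin_add power2_eq_square algebra_simps)
    also have "\<dots> = (sin x)\<^sup>2 - (sin t)\<^sup>2"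
      by (simp add: cos_squared_eq algebra_simps)
    finally show ?thesis .
  qed
  have sign: "(-1::real) ^ (k + 1 - 1) = - ((-1) ^ (k - 1))"
    using k by (cases k) simp_all
  have sign2: "((-1::real) ^ (k - 1))\<^sup>2 = 1"
    by (simp add: power_mult[symmetric] mult.commute)
  have piv: "cycle_pivot t k = sin x / (2 * sin (x - t))"
    and piv1: "cycle_pivot t (k + 1) = sin (x + t) / (2 * sin x)"
    and cor: "cycle_corner t k = (-1) ^ (k - 1) * sin t / sin (x - t)"
    and cor1: "cycle_corner t (k + 1) = - ((-1) ^ (k - 1)) * sin t / sin x"
    unfolding cycle_pivot_def cycle_corner_def x_minus[symmetric] x_plus[symmetric] sign
    by (simp_all add: x_def add.assoc)
  have "sin (x - t) \<noteq> 0" "sin x \<noteq> 0"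
    using S0 S1 unfolding x_minus[symmetric] by (simp_all add: x_def)
  then show "cos t - 1 / (4 * cycle_pivot t k) = cycle_pivot t (k + 1)"
    and "- cycle_corner t k / (2 * cycle_pivot t k) = cycle_corner t (k + 1)"
    and "cycle_pivot t k - (cycle_corner t k)\<^sup>2 / (4 * cycle_pivot t k) = cycle_pivot t (k + 1)"
    unfolding piv piv1 cor cor1 using sum prod sign2
    by (simp_all add: field_simps power2_eq_square) algebra+
qed

locale psd_form =
  fixes G :: "'v::ab_group_add \<Rightarrow> 'v \<Rightarrow> real" and scale :: "real \<Rightarrow> 'v \<Rightarrow> 'v"
  assumes sym: "G x y = G y x"
    and add_left: "G (x + y) z = G x z + G y z"
    and scale_left: "G (scale r x) y = r * G x y"
    and nonneg: "0 \<le> G x x"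
begin

lemma add_right: "G x (y + z) = G x y + G x z"
  using add_left sym by metis

lemma scale_right: "G x (scale r y) = r * G x y"
  using scale_left sym by metis

lemma complete_square:
  assumes "p \<noteq> 0"
  shows "p * G (x + scale (1 / (2 * p)) (y + scale q z)) (x + scale (1 / (2 * p)) (y + scale q z))
    = p * G x x + G x y + q * G x z + (G y y + 2 * q * G y z + q\<^sup>2 * G z z) / (4 * p)"
  using assms sym[of y x] sym[of z x] sym[of z y]
  by (simp add: add_left add_right scale_left scale_right field_simps power2_eq_square)

text \<open>The cycle form once the squares in s_1, ..., s_(a-1) have been completed.\<close>

definition cycle_tail :: "nat \<Rightarrow> real \<Rightarrow> (nat \<Rightarrow> 'v) \<Rightarrow> nat \<Rightarrow> real" where
  "cycle_tail n t s a =
     cycle_pivot t a * (G (s a) (s a) + G (s n) (s n)) + G (s a) (s (a + 1))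
     + cycle_corner t a * G (s a) (s n)
     + (\<Sum>b = a + 1..n - 1. cos t * G (s b) (s b) + G (s b) (s (b + 1)))"

lemma cycle_tail_step:
  assumes a: "1 \<le> a" "a + 2 \<le> n"
    and S0: "sin (real a * t) \<noteq> 0" and S1: "sin (real (a + 1) * t) \<noteq> 0"
  shows "\<exists>v. cycle_tail n t s a = cycle_pivot t a * G v v + cycle_tail n t s (a + 1)"
proof -
  define p where "p = cycle_pivot t a"
  define q where "q = cycle_corner t a"
  define p' where "p' = cycle_pivot t (a + 1)"
  define q' where "q' = cycle_corner t (a + 1)"
  define v where "v = s a + scale (1 / (2 * p)) (s (a + 1) + scale q (s n))"
  have p: "p \<noteq> 0" using S0 S1 by (simp add: p_def cycle_pivot_def)
  note rec = cycle_coeff_recurrences[OF a(1) S0 S1, folded p_def q_def p'_def q'_def]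
  have split: "(\<Sum>b = a + 1..n - 1. cos t * G (s b) (s b) + G (s b) (s (b + 1)))
      = cos t * G (s (a + 1)) (s (a + 1)) + G (s (a + 1)) (s (a + 2))
        + (\<Sum>b = a + 2..n - 1. cos t * G (s b) (s b) + G (s b) (s (b + 1)))"
    using a by (subst sum.atLeast_Suc_atMost) (auto simp: numeral_2_eq_2)
  have "cycle_tail n t s a - cycle_tail n t s (a + 1) - p * G v v
      = (cos t - 1 / (4 * p) - p') * G (s (a + 1)) (s (a + 1))
        + (- q / (2 * p) - q') * G (s (a + 1)) (s n)
        + (p - q\<^sup>2 / (4 * p) - p') * G (s n) (s n)"
    unfolding v_def complete_square[OF p] cycle_tail_def split
      p_def[symmetric] q_def[symmetric] p'_def[symmetric] q'_def[symmetric]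
    using p by (simp add: numeral_2_eq_2 field_simps power2_eq_square)
  moreover have "cos t - 1 / (4 * p) - p' = 0" "- q / (2 * p) - q' = 0" "p - q\<^sup>2 / (4 * p) - p' = 0"
    using rec by simp_all
  ultimately have "cycle_tail n t s a = p * G v v + cycle_tail n t s (a + 1)"
    by simp
  then show ?thesis unfolding p_def by blast
qed

lemma cycle_tail_last:
  assumes "odd n" "3 \<le> n"
  shows "cycle_tail n (pi / real n) s (n - 1) = 0"
proof -
  define t where "t = pi / real n"
  have "real (n - 1 + 1) * t = pi"
    using assms by (simp add: t_def)
  then have "cycle_pivot t (n - 1) = 0"
    by (simp add: cycle_pivot_def)
  moreover have "real (n - 1) * t = pi - t"
    using assms by (simp add: t_def field_simps)
  then have "sin (real (n - 1) * t) = sin t"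
    by simp
  \<comment> \<open>Oddness of n enters here: the corner coupling cancels the closing edge.\<close>
  moreover have "(-1::real) ^ (n - 1 - 1) = -1"
    using assms by (simp add: numeral_2_eq_2[symmetric])
  moreover have "sin t \<noteq> 0"
    using sin_pi_div_gt_zero[of 1 n] assms by (simp add: t_def)
  moreover have "n - 1 + 1 = n" using assms by simp
  ultimately show ?thesis by (simp add: cycle_tail_def cycle_corner_def t_def)
qed

lemma cycle_tail_nonneg:
  assumes "odd n" "3 \<le> n" "1 \<le> a" "a \<le> n - 1"
  shows "0 \<le> cycle_tail n (pi / real n) s a"
  using \<open>a \<le> n - 1\<close> \<open>1 \<le> a\<close>
proof (induction a rule: inc_induct)
  case base
  then show ?case using cycle_tail_last[OF assms(1,2)] by simp
next
  case (step a)
  let ?t = "pi / real n"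
  have S0: "0 < sin (real a * ?t)" and S1: "0 < sin (real (a + 1) * ?t)"
    using step sin_pi_div_gt_zero[of a n] sin_pi_div_gt_zero[of "a + 1" n] by auto
  moreover have "a + 2 \<le> n" using step by simp
  then obtain v where "cycle_tail n ?t s a = cycle_pivot ?t a * G v v + cycle_tail n ?t s (a + 1)"
    using cycle_tail_step[of a n ?t s] step S0 S1 by auto
  ultimately show ?case
    using step nonneg[of v] by (simp add: cycle_pivot_def)
qed

lemma odd_cycle_form_nonneg:
  assumes "odd n" "3 \<le> n"
  shows "0 \<le> (\<Sum>a = 1..n. cos (pi / real n) * G (s a) (s a) + G (s a) (s (cyc_succ n a)))"
proof -
  let ?t = "pi / real n"
  let ?f = "\<lambda>a. cos ?t * G (s a) (s a) + G (s a) (s (a + 1))"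
  have sin_t: "0 < sin ?t" using sin_pi_div_gt_zero[of 1 n] assms by simp
  have "(\<Sum>a = 1..n. cos ?t * G (s a) (s a) + G (s a) (s (cyc_succ n a)))
      = (\<Sum>a = 1..n - 1. ?f a) + (cos ?t * G (s n) (s n) + G (s n) (s 1))"
  proof -
    have "{1..n} = insert n {1..n - 1}" using assms by auto
    moreover have "(\<Sum>a = 1..n - 1. cos ?t * G (s a) (s a) + G (s a) (s (cyc_succ n a)))
        = (\<Sum>a = 1..n - 1. ?f a)"
      by (intro sum.cong) (auto simp: cyc_succ_less)
    ultimately show ?thesis using assms by (simp add: cyc_succ_self add.commute)
  qed
  also have "\<dots> = ?f 1 + (\<Sum>a = 2..n - 1. ?f a) + (cos ?t * G (s n) (s n) + G (s 1) (s n))"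
    using assms sym[of "s n" "s 1"] by (subst sum.atLeast_Suc_atMost) (auto simp: numeral_2_eq_2)
  also have "\<dots> = cycle_tail n ?t s 1"
  proof -
    have "sin (real (1 + 1) * ?t) = 2 * sin ?t * cos ?t"
      using sin_double[of ?t] by simp
    then have "cycle_pivot ?t 1 = cos ?t" and "cycle_corner ?t 1 = 1"
      using sin_t by (simp_all add: cycle_pivot_def cycle_corner_def)
    then show ?thesis by (simp add: cycle_tail_def algebra_simps numeral_2_eq_2)
  qed
  finally show ?thesis using cycle_tail_nonneg[OF assms, of 1 s] assms by simp
qed

lemma odd_cycle_orthogonal_bound:
  assumes n: "odd n" "3 \<le> n"
    and self: "\<And>a. a \<in> {1..n} \<Longrightarrow> G (w a) (w a) = 4 * G \<psi> (w a)"
    and orth: "\<And>a. a \<in> {1..n} \<Longrightarrow> G (w a) (w (cyc_succ n a)) = 0"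
  shows "(\<Sum>a = 1..n. G \<psi> (w a)) \<le> 4 * real n * cos (pi / real n) / (1 + cos (pi / real n)) * G \<psi> \<psi>"
proof -
  define c where "c = cos (pi / real n)"
  define \<kappa> where "\<kappa> = c / (1 + c)"
  \<comment> \<open>The shift turns the cycle form into 4c times the gap in the claimed bound.\<close>
  define s where "s a = w a + scale (- 4 * \<kappa>) \<psi>" for a
  have c: "0 < c" unfolding c_def by (rule cos_pi_div_gt_zero[OF n(2)])
  have G_s: "G (s a) (s b)
      = G (w a) (w b) - 4 * \<kappa> * G \<psi> (w a) - 4 * \<kappa> * G \<psi> (w b) + 16 * \<kappa>\<^sup>2 * G \<psi> \<psi>" for a b
    using sym[of "w a" \<psi>]
    by (simp add: s_def add_left add_right scale_left scale_right power2_eq_square algebra_simps)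
  have "(\<Sum>a = 1..n. c * G (s a) (s a) + G (s a) (s (cyc_succ n a)))
      = (\<Sum>a = 1..n. (4 * c - 8 * c * \<kappa> - 4 * \<kappa>) * G \<psi> (w a) - 4 * \<kappa> * G \<psi> (w (cyc_succ n a))
                     + 16 * \<kappa>\<^sup>2 * (1 + c) * G \<psi> \<psi>)"
    by (intro sum.cong refl) (simp add: G_s self orth algebra_simps)
  also have "\<dots> = (4 * c - 8 * c * \<kappa> - 8 * \<kappa>) * (\<Sum>a = 1..n. G \<psi> (w a))
                  + real n * (16 * \<kappa>\<^sup>2 * (1 + c)) * G \<psi> \<psi>"
    using sum_cyc_succ_reindex[of "\<lambda>a. G \<psi> (w a)" n]
    by (simp add: sum.distrib sum_subtractf sum_distrib_left[symmetric] sum_distrib_right[symmetric] algebra_simps)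
  also have "\<dots> = - 4 * c * (\<Sum>a = 1..n. G \<psi> (w a)) + real n * (16 * c\<^sup>2 / (1 + c)) * G \<psi> \<psi>"
  proof -
    have \<kappa>: "\<kappa> * (1 + c) = c" using c by (simp add: \<kappa>_def)
    have "4 * c - 8 * c * \<kappa> - 8 * \<kappa> = 4 * c - 8 * (\<kappa> * (1 + c))"
      and "16 * \<kappa>\<^sup>2 * (1 + c) = 16 * (\<kappa> * (1 + c)) * \<kappa>"
      by (simp_all add: algebra_simps power2_eq_square)
    then have diag: "4 * c - 8 * c * \<kappa> - 8 * \<kappa> = - 4 * c"
      and const: "16 * \<kappa>\<^sup>2 * (1 + c) = 16 * c\<^sup>2 / (1 + c)"
      unfolding \<kappa> by (simp_all add: \<kappa>_def power2_eq_square)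
    show ?thesis unfolding diag const ..
  qed
  also have "\<dots> = 4 * c * (4 * real n * c / (1 + c) * G \<psi> \<psi> - (\<Sum>a = 1..n. G \<psi> (w a)))"
    by (simp add: algebra_simps power2_eq_square)
  finally have "0 \<le> 4 * c * (4 * real n * c / (1 + c) * G \<psi> \<psi> - (\<Sum>a = 1..n. G \<psi> (w a)))"
    using odd_cycle_form_nonneg[OF n, of s] by (simp add: c_def)
  then show ?thesis using c by (simp add: zero_le_mult_iff c_def)
qed

end

lemma hilbert_space_ip:
  assumes "hilbert_space sc ip"
  shows ip_cnj: "ip x y = cnj (ip y x)"
    and ip_add_right: "ip x (y + z) = ip x y + ip x z"
    and ip_scale_right: "ip x (sc c y) = c * ip x y"
    and ip_self_nonneg: "0 \<le> Re (ip x x)"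
proof -
  note H = assms[unfolded hilbert_space_def, THEN conjunct2]
  show "ip x y = cnj (ip y x)" by (rule H[THEN conjunct1, rule_format])
  show "ip x (y + z) = ip x y + ip x z" by (rule H[THEN conjunct2, THEN conjunct1, rule_format])
  show "ip x (sc c y) = c * ip x y" by (rule H[THEN conjunct2, THEN conjunct2, THEN conjunct1, rule_format])
  show "0 \<le> Re (ip x x)" by (rule H[THEN conjunct2, THEN conjunct2, THEN conjunct2, THEN conjunct1, rule_format])
qed

lemma ip_add_left:
  assumes "hilbert_space sc ip"
  shows "ip (x + y) z = ip x z + ip y z"
  using ip_cnj[OF assms, of "x + y" z] ip_add_right[OF assms, of z x y]
    ip_cnj[OF assms, of z x] ip_cnj[OF assms, of z y]
  by simp

lemma ip_diff_right: "hilbert_space sc ip \<Longrightarrow> ip x (y - z) = ip x y - ip x z"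
  using ip_add_right[of sc ip x "y - z" z] by (simp add: algebra_simps)

lemma ip_diff_left: "hilbert_space sc ip \<Longrightarrow> ip (x - y) z = ip x z - ip y z"
  using ip_add_left[of sc ip "x - y" y z] by (simp add: algebra_simps)

lemma ip_zero_right: "hilbert_space sc ip \<Longrightarrow> ip x 0 = 0"
  using ip_add_right[of sc ip x 0 0] by simp

lemma ip_sum_right: "hilbert_space sc ip \<Longrightarrow> ip x (\<Sum>a\<in>S. f a) = (\<Sum>a\<in>S. ip x (f a))"
  by (induction S rule: infinite_finite_induct) (simp_all add: ip_zero_right ip_add_right)

lemma hilbert_space_Re_ip_psd_form:
  assumes "hilbert_space sc ip"
  shows "psd_form (\<lambda>x y. Re (ip x y)) (\<lambda>r. sc (complex_of_real r))"
proof
  show "Re (ip x y) = Re (ip y x)" for x y using ip_cnj[OF assms, of x y] by simp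
  show "Re (ip (x + y) z) = Re (ip x z) + Re (ip y z)" for x y z by (simp add: ip_add_left[OF assms])
  show "Re (ip (sc (complex_of_real r) x) y) = r * Re (ip x y)" for r x y
    using ip_cnj[OF assms, of "sc (complex_of_real r) x" y] ip_cnj[OF assms, of y x]
    by (simp add: ip_scale_right[OF assms])
  show "0 \<le> Re (ip x x)" for x by (rule ip_self_nonneg[OF assms])
qed

text \<open>(1 + A)(1 - B) psi: four times the projection of psi onto the joint eigenspace A = 1, B = -1.\<close>

definition anticorr_vec :: "('h \<Rightarrow> 'h) \<Rightarrow> ('h \<Rightarrow> 'h) \<Rightarrow> 'h \<Rightarrow> 'h::ab_group_add" where
  "anticorr_vec A B \<psi> = \<psi> + A \<psi> - B \<psi> - A (B \<psi>)"

lemma ip_anticorr_vec_self: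
  assumes H: "hilbert_space sc ip"
    and hA: "\<And>x y. ip (A x) y = ip x (A y)" and hB: "\<And>x y. ip (B x) y = ip x (B y)"
    and iA: "\<And>x. A (A x) = x" and iB: "\<And>x. B (B x) = x" and AB: "\<And>x. A (B x) = B (A x)"
  shows "ip (anticorr_vec A B \<psi>) (anticorr_vec A B \<psi>) = 4 * ip \<psi> (anticorr_vec A B \<psi>)"
  unfolding anticorr_vec_def
  by (simp add: ip_add_left[OF H] ip_diff_left[OF H] ip_add_right[OF H] ip_diff_right[OF H] hA hB iA iB AB)

lemma ip_anticorr_vec_chain:
  assumes H: "hilbert_space sc ip"
    and hB: "\<And>x y. ip (B x) y = ip x (B y)"
    and iB: "\<And>x. B (B x) = x" and AB: "\<And>x. A (B x) = B (A x)"
  shows "ip (anticorr_vec A B \<psi>) (anticorr_vec B C \<psi>) = 0"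
  unfolding anticorr_vec_def
  by (simp add: ip_add_left[OF H] ip_diff_left[OF H] ip_add_right[OF H] ip_diff_right[OF H] hB iB AB)

lemma ip_anticorr_vec_add_swap:
  assumes H: "hilbert_space sc ip" and AB: "\<And>x. A (B x) = B (A x)"
  shows "ip \<psi> (anticorr_vec A B \<psi>) + ip \<psi> (anticorr_vec B A \<psi>) = 2 * ip \<psi> \<psi> - 2 * ip \<psi> (A (B \<psi>))"
  unfolding anticorr_vec_def by (simp add: ip_add_right[OF H] ip_diff_right[OF H] AB)

lemma sum_adjacent_products_lower_bound:
  fixes X :: "nat \<Rightarrow> 'h::ab_group_add \<Rightarrow> 'h"
  assumes H: "hilbert_space sc ip" and n: "odd n" "3 \<le> n"
    and hermitian: "\<And>a. a \<in> {1..n} \<Longrightarrow> hermitian_op sc ip (X a)"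
    and involution: "\<And>a x. a \<in> {1..n} \<Longrightarrow> X a (X a x) = x"
    and commute: "\<And>a x. a \<in> {1..n} \<Longrightarrow> X a (X (cyc_succ n a) x) = X (cyc_succ n a) (X a x)"
  shows "real n * (1 - 4 * cos (pi / real n) / (1 + cos (pi / real n))) * Re (ip \<psi> \<psi>)
    \<le> Re (ip \<psi> (\<Sum>a = 1..n. X a (X (cyc_succ n a) \<psi>)))"
proof -
  interpret psd_form "\<lambda>x y. Re (ip x y)" "\<lambda>r. sc (complex_of_real r)"
    by (rule hilbert_space_Re_ip_psd_form[OF H])
  let ?b = "cyc_succ n"
  define B where "B = 4 * real n * cos (pi / real n) / (1 + cos (pi / real n)) * Re (ip \<psi> \<psi>)"
  define w where "w a = anticorr_vec (X a) (X (?b a)) \<psi>" for a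
  define w' where "w' a = anticorr_vec (X (?b a)) (X a) \<psi>" for a
  have sa: "\<And>x y. ip (X a x) y = ip x (X a y)" if "a \<in> {1..n}" for a
    using hermitian[OF that] by (simp add: hermitian_op_def)
  have b: "?b a \<in> {1..n}" if "a \<in> {1..n}" for a using that by (rule cyc_succ_in)
  have w_self: "Re (ip (w a) (w a)) = 4 * Re (ip \<psi> (w a))"
    and w'_self: "Re (ip (w' a) (w' a)) = 4 * Re (ip \<psi> (w' a))"
    and w_orth: "Re (ip (w a) (w (?b a))) = 0"
    and w'_orth: "Re (ip (w' a) (w' (?b a))) = 0"
    if a: "a \<in> {1..n}" for a
  proof -
    note a' = b[OF a]
    note facts = sa[OF a] sa[OF a'] involution[OF a] involution[OF a'] commute[OF a]
      commute[OF a'] commute[OF a, symmetric] commute[OF a', symmetric]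
    have "ip (w a) (w a) = 4 * ip \<psi> (w a)"
      unfolding w_def by (rule ip_anticorr_vec_self[OF H]) (fact facts)+
    moreover have "ip (w' a) (w' a) = 4 * ip \<psi> (w' a)"
      unfolding w'_def by (rule ip_anticorr_vec_self[OF H]) (fact facts)+
    moreover have "ip (w a) (w (?b a)) = 0"
      unfolding w_def by (rule ip_anticorr_vec_chain[OF H]) (fact facts)+
    moreover have "ip (w' a) (w' (?b a)) = 0"
    proof -
      have "ip (w' (?b a)) (w' a) = 0"
        unfolding w'_def by (rule ip_anticorr_vec_chain[OF H]) (fact facts)+
      then show ?thesis using ip_cnj[OF H, of "w' a"] by simp
    qed
    ultimately show "Re (ip (w a) (w a)) = 4 * Re (ip \<psi> (w a))"
      and "Re (ip (w' a) (w' a)) = 4 * Re (ip \<psi> (w' a))"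
      and "Re (ip (w a) (w (?b a))) = 0"
      and "Re (ip (w' a) (w' (?b a))) = 0"
      by simp_all
  qed
  have "(\<Sum>a = 1..n. Re (ip \<psi> (w a))) \<le> B"
    unfolding B_def by (rule odd_cycle_orthogonal_bound[where w = w, OF n w_self w_orth])
  moreover have "(\<Sum>a = 1..n. Re (ip \<psi> (w' a))) \<le> B"
    unfolding B_def by (rule odd_cycle_orthogonal_bound[where w = w', OF n w'_self w'_orth])
  moreover have "Re (ip \<psi> (X a (X (?b a) \<psi>))) = Re (ip \<psi> \<psi>) - (Re (ip \<psi> (w a)) + Re (ip \<psi> (w' a))) / 2"
    if "a \<in> {1..n}" for a
    using arg_cong[OF ip_anticorr_vec_add_swap[where A = "X a" and B = "X (?b a)", OF H commute[OF that]], of Re]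
    by (simp add: w_def w'_def field_simps)
  then have "Re (ip \<psi> (\<Sum>a = 1..n. X a (X (?b a) \<psi>)))
      = real n * Re (ip \<psi> \<psi>) - ((\<Sum>a = 1..n. Re (ip \<psi> (w a))) + (\<Sum>a = 1..n. Re (ip \<psi> (w' a)))) / 2"
    by (simp add: ip_sum_right[OF H] sum_subtractf sum.distrib sum_divide_distrib[symmetric])
  moreover have "real n * (1 - 4 * cos (pi / real n) / (1 + cos (pi / real n))) * Re (ip \<psi> \<psi>)
      = real n * Re (ip \<psi> \<psi>) - B"
    by (simp add: B_def algebra_simps)
  ultimately show ?thesis by argo
qed

lemma expect_psi0: "expect M psi0 = M $ 3 $ 3"
  by (simp add: expect_def braket_def psi0_def matrix_vector_mult_def sum_3)

lemma obs_proj_mult_33: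
  "(obs (proj u) ** obs (proj v)) $ 3 $ 3
     = 4 * u $ 3 * cnj (v $ 3) * braket u v - 2 * u $ 3 * cnj (u $ 3) - 2 * v $ 3 * cnj (v $ 3) + 1"
  by (simp add: obs_def proj_def braket_def matrix_matrix_mult_def sum_3 algebra_simps)

lemma anticorr_proj_33:
  "(proj u ** (mat 1 - proj v) + (mat 1 - proj u) ** proj v) $ 3 $ 3
     = u $ 3 * cnj (u $ 3) + v $ 3 * cnj (v $ 3) - 2 * u $ 3 * cnj (v $ 3) * braket u v"
  by (simp add: proj_def braket_def matrix_matrix_mult_def mat_def sum_3 algebra_simps)

lemma braket_ket_l:
  "braket (ket_l \<theta> p) (ket_l \<theta> q) = complex_of_real ((sin \<theta>)\<^sup>2 * cos (p - q) + (cos \<theta>)\<^sup>2)"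
  by (simp add: braket_def ket_l_def sum_3 cos_diff power2_eq_square algebra_simps)

lemma ket_l_3_mult_cnj: "ket_l \<theta> p $ 3 * cnj (ket_l \<theta> p $ 3) = complex_of_real ((cos \<theta>)\<^sup>2)"
  by (simp add: ket_l_def power2_eq_square)

lemma cos_phi_angle_diff:
  assumes "odd n" "3 \<le> n" "a \<in> {1..n}"
  shows "cos (phi_angle n a - phi_angle n (cyc_succ n a)) = - cos (pi / real n)"
proof (cases "a < n")
  case True
  then have "phi_angle n a - phi_angle n (cyc_succ n a) = pi / real n - pi"
    using assms by (simp add: cyc_succ_less phi_angle_def field_simps)
  then show ?thesis by (simp add: cos_diff)
next
  case False
  then have "a = n" using assms by simp
  moreover have "phi_angle n n - phi_angle n 1 = real (n - 2) * pi + pi / real n"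
    using assms by (simp add: phi_angle_def field_simps power2_eq_square)
  moreover have "odd (n - 2)"
    using assms by simp
  then have "cos (real (n - 2) * pi) = -1"
    by (simp only: cos_npi) simp
  then have "cos (real (n - 2) * pi + pi / real n) = - cos (pi / real n)"
    by (simp only: cos_add sin_npi)
  ultimately show ?thesis by (simp add: cyc_succ_self)
qed

lemma two_cos_pi_div_gt:
  assumes "5 \<le> n"
  shows "1 - 1 / real n < 2 * cos (pi / real n) / (1 + cos (pi / real n))"
proof -
  define c where "c = cos (pi / real n)"
  have c: "0 < c" using assms cos_pi_div_gt_zero[of n] by (simp add: c_def)
  have "pi\<^sup>2 < 4\<^sup>2"
    using pi_less_4 pi_gt_zero by (intro power_strict_mono) auto
  then have "pi\<^sup>2 * (real n + 1) < 16 * (real n + 1)"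
    by (intro mult_strict_right_mono) auto
  also have "\<dots> \<le> 4 * (real n)\<^sup>2"
  proof -
    have "0 \<le> (real n - 5) * (real n + 1)" using assms by simp
    then show ?thesis by (simp add: algebra_simps power2_eq_square)
  qed
  finally have "real n - 1 < (1 - (pi / real n)\<^sup>2 / 2) * (real n + 1)"
    using assms by (simp add: field_simps power2_eq_square)
  also have "\<dots> \<le> c * (real n + 1)"
    unfolding c_def by (intro mult_right_mono cos_ge_one_minus_half_square) simp
  finally show ?thesis using c assms by (simp add: c_def[symmetric] field_simps)
qed

context
  fixes n :: nat and \<theta> :: real
  assumes n: "odd n" "3 \<le> n"
    and \<theta>: "(cos \<theta>)\<^sup>2 = cos (pi / real n) / (1 + cos (pi / real n))"
begin

lemma ket_l_cyc_succ_orthogonal: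
  assumes "a \<in> {1..n}"
  shows "braket (ket_l \<theta> (phi_angle n a)) (ket_l \<theta> (phi_angle n (cyc_succ n a))) = 0"
proof -
  have c: "0 < cos (pi / real n)" using cos_pi_div_gt_zero[OF n(2)] .
  have sin: "(sin \<theta>)\<^sup>2 = 1 / (1 + cos (pi / real n))"
    using \<theta> c by (simp add: sin_squared_eq field_simps)
  have "(sin \<theta>)\<^sup>2 * - cos (pi / real n) + (cos \<theta>)\<^sup>2 = 0"
    unfolding sin \<theta> using c by (simp add: field_simps)
  then show ?thesis
    unfolding braket_ket_l cos_phi_angle_diff[OF n assms] by simp
qed

lemma expect_sum_adjacent_obs:
  "expect (\<Sum>a = 1..n. obs (proj (ket_l \<theta> (phi_angle n a)))
                         ** obs (proj (ket_l \<theta> (phi_angle n (cyc_succ n a))))) psi0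
     = complex_of_real (real n - 4 * real n * cos (pi / real n) / (1 + cos (pi / real n)))"
  (is "?lhs = _")
proof -
  have "(obs (proj (ket_l \<theta> (phi_angle n a))) ** obs (proj (ket_l \<theta> (phi_angle n (cyc_succ n a)))))
          $ 3 $ 3 = complex_of_real (1 - 4 * cos (pi / real n) / (1 + cos (pi / real n)))" if "a \<in> {1..n}" for a
    by (simp only: obs_proj_mult_33 ket_l_cyc_succ_orthogonal[OF that] mult.assoc ket_l_3_mult_cnj \<theta>)
      (simp add: field_simps)
  then have "?lhs = (\<Sum>a = 1..n. complex_of_real (1 - 4 * cos (pi / real n) / (1 + cos (pi / real n))))"
    by (simp add: expect_psi0)
  also have "\<dots> = complex_of_real (real n * (1 - 4 * cos (pi / real n) / (1 + cos (pi / real n))))"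
    by simp
  finally show ?thesis by (simp add: algebra_simps)
qed

lemma anticorr_prob_adjacent:
  assumes "a \<in> {1..n}"
  shows "anticorr_prob (proj (ket_l \<theta> (phi_angle n a))) (proj (ket_l \<theta> (phi_angle n (cyc_succ n a)))) psi0
    = complex_of_real (2 * cos (pi / real n) / (1 + cos (pi / real n)))"
  unfolding anticorr_prob_def expect_psi0 anticorr_proj_33 ket_l_cyc_succ_orthogonal[OF assms]
    ket_l_3_mult_cnj \<theta> by simp

end

theorem mainTheorem5:
  fixes n :: nat
  assumes "odd n" and "n \<ge> 3"
  shows
   "(\<forall>(sc :: complex \<Rightarrow> 'h::ab_group_add \<Rightarrow> 'h) ip (X :: nat \<Rightarrow> 'h \<Rightarrow> 'h).
       hilbert_space sc ip \<and>
       (\<forall>a\<in>{1..n}. hermitian_op sc ip (X a) \<and> (\<forall>x. X a (X a x) = x) \<and>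
                    (\<forall>x. X a (X (cyc_succ n a) x) = X (cyc_succ n a) (X a x)))
       \<longrightarrow> (\<forall>\<psi>. Re (ip \<psi> (\<Sum>a=1..n. X a (X (cyc_succ n a) \<psi>)))
                 \<ge> real n * (1 - 4 * cos (pi / real n) / (1 + cos (pi / real n))) * Re (ip \<psi> \<psi>)))
    \<and>
    (\<forall>\<theta>::real. (cos \<theta>)\<^sup>2 = cos (pi / real n) / (1 + cos (pi / real n)) \<longrightarrow>
       (let l = (\<lambda>a. ket_l \<theta> (phi_angle n a)) in
         (\<forall>a\<in>{1..n}. braket (l a) (l (cyc_succ n a)) = 0) \<and>
         expect (\<Sum>a=1..n. obs (proj (l a)) ** obs (proj (l (cyc_succ n a)))) psi0
           = complex_of_real (real n - 4 * real n * cos (pi / real n) / (1 + cos (pi / real n))) \<and>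
         (\<forall>a\<in>{1..n}. anticorr_prob (proj (l a)) (proj (l (cyc_succ n a))) psi0
           = complex_of_real (2 * cos (pi / real n) / (1 + cos (pi / real n)))) \<and>
         (n \<ge> 5 \<longrightarrow> (\<forall>a\<in>{1..n}.
           Re (anticorr_prob (proj (l a)) (proj (l (cyc_succ n a))) psi0) > 1 - 1 / real n))))"
  apply (intro conjI allI impI)
  subgoal using sum_adjacent_products_lower_bound[OF _ assms] by blast
  subgoal for \<theta>
    using ket_l_cyc_succ_orthogonal[OF assms] expect_sum_adjacent_obs[OF assms]
      anticorr_prob_adjacent[OF assms] two_cos_pi_div_gt
    by (simp add: Let_def)
  done

end
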